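(* Let $F$ be a dill map with diameter $\delta$ and local rule $f$, and let $M,M'\in\mathbb N$ be such that for every $u\in A^*$ and every $j\in\{0,\dots,|u|-1\}$, $d_L(f^*(D_j(u)),f^*(u))\le M+\frac{|f^*(u)|-|f^*(D_j(u))|}{2}$ and $d_L(f^*(D_j(u)),f^*(u))\le M'-\frac{|f^*(u)|-|f^*(D_j(u))|}{2}$. Let $L>0$ and let $x\in A^{\mathbb N}$ be such that $|f(x_{[i,i+\delta)})|\ge L$ for every $i\in\mathbb N$. Then for every $y\in A^{\mathbb N}$, $\mathfrak d_L(F(x),F(y))\le\frac{M+M'}{L}\,\mathfrak d_L(x,y)$.
   Context: $A$ is a finite alphabet, $A^*$ the finite words, $A^+$ the nonempty finite words, $u_{[i,j)}=u_i\cdots u_{j-1}$. A dill map with diameter $\delta\ge1$ has local rule $f:A^\delta\to A^+$ and is $F(x)=f(x_{[0,\delta)})f(x_{[1,\delta+1)})\cdots$. $f^*(u)=f(u_{[0,\delta)})f(u_{[1,\delta+1)})\cdots f(u_{[|u|-\delta,|u|)})$ if $|u|\ge\delta$, and the empty word otherwise. $D_j(u)$ is $u$ with its letter at position $j$ deleted. The Levenshtein distance is $d_L(u,v)=\frac{|u|+|v|}{2}-\ell$, $\ell$ the length of a longest common subsequence. The Feldman pseudo-metric is $\mathfrak d_L(x,y)=\limsup_{l\to\infty}d_L(x_{[0,l)},y_{[0,l)})/l$. *)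

theory Defs
  imports Complex_Main "HOL-Library.Sublist" "HOL-Library.Liminf_Limsup" "HOL-Library.Extended_Real"
begin

definition window :: "nat \<Rightarrow> (nat \<Rightarrow> 'a) \<Rightarrow> nat \<Rightarrow> 'a list" where
  "window \<delta> x i = map (\<lambda>k. x (i + k)) [0..<\<delta>]"

definition pref :: "(nat \<Rightarrow> 'a) \<Rightarrow> nat \<Rightarrow> 'a list" where
  "pref x l = map x [0..<l]"

definition dill_blocks :: "nat \<Rightarrow> ('a list \<Rightarrow> 'b list) \<Rightarrow> (nat \<Rightarrow> 'a) \<Rightarrow> nat \<Rightarrow> 'b list" where
  "dill_blocks \<delta> f x k = concat (map (\<lambda>i. f (window \<delta> x i)) [0..<k])"

text \<open>F(x) = f(x_[0,delta)) f(x_[1,delta+1)) ...; its n-th letter lies in the first n+1 blocks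
  since every block is nonempty.\<close>
definition dill :: "nat \<Rightarrow> ('a list \<Rightarrow> 'b list) \<Rightarrow> (nat \<Rightarrow> 'a) \<Rightarrow> nat \<Rightarrow> 'b" where
  "dill \<delta> f x n = dill_blocks \<delta> f x (Suc n) ! n"

definition fstar :: "nat \<Rightarrow> ('a list \<Rightarrow> 'b list) \<Rightarrow> 'a list \<Rightarrow> 'b list" where
  "fstar \<delta> f u = (if \<delta> \<le> length u
     then concat (map (\<lambda>i. f (take \<delta> (drop i u))) [0..<length u - \<delta> + 1]) else [])"

definition Del :: "nat \<Rightarrow> 'a list \<Rightarrow> 'a list" where
  "Del j u = take j u @ drop (Suc j) u"

definition lcs_len :: "'a list \<Rightarrow> 'a list \<Rightarrow> nat" where
  "lcs_len u v = Max {length w | w. subseq w u \<and> subseq w v}"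

definition lev :: "'a list \<Rightarrow> 'a list \<Rightarrow> real" where
  "lev u v = (real (length u) + real (length v)) / 2 - real (lcs_len u v)"

definition feldman :: "(nat \<Rightarrow> 'a) \<Rightarrow> (nat \<Rightarrow> 'a) \<Rightarrow> ereal" where
  "feldman x y = limsup (\<lambda>l. ereal (lev (pref x l) (pref y l) / real l))"

end

theory Submission
  imports Defs
begin

text \<open>Let e(l) be the Levenshtein distance of the length-l prefixes of x and y. Two words u, v
  of equal length both reach a longest common subsequence by d_L(u,v) single deletions. Charging
  these deletions with the first hypothesis on the side of u and with the second on the side of v,
  the length terms combine into d_L(f*(u), f*(v)) <= (M + M') d_L(u,v) - ||f*(u)| - |f*(v)||/2.
  At the end of the k-th output block the prefix of F(x) is f*(x[0,k+\<delta>-1)), and the prefix of F(y)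
  of the same length is prefix-comparable with f*(y[0,k+\<delta>-1)); the subtracted length term pays
  exactly for this mismatch, so the distance there is at most (M + M') e(k+\<delta>-1). Inside a block
  the distance grows by at most the block length, which is bounded as the alphabet is finite,
  while the k-th block ends at position at least L k; dividing by the position and passing to the
  limsup gives the factor (M + M')/L.\<close>

lemma finite_common_subseq_lengths: "finite {length w | w. subseq w u \<and> subseq w v}"
proof (rule finite_subset)
  show "{length w | w. subseq w u \<and> subseq w v} \<subseteq> {..length u}"
    by (auto dest: list_emb_length)
qed simp

lemma length_le_lcs_len: "subseq w u \<Longrightarrow> subseq w v \<Longrightarrow> length w \<le> lcs_len u v"
  unfolding lcs_len_def by (rule Max_ge[OF finite_common_subseq_lengths]) blast

lemma obtain_lcs:
  obtains w where "subseq w u" "subseq w v" "length w = lcs_len u v"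
proof -
  have "lcs_len u v \<in> {length w | w. subseq w u \<and> subseq w v}"
    unfolding lcs_len_def
    by (rule Max_in[OF finite_common_subseq_lengths]) (auto intro!: exI[of _ "[]"])
  then show thesis using that by auto
qed

lemma lcs_len_le_length: "lcs_len u v \<le> length u"
  by (metis obtain_lcs list_emb_length)

lemma lcs_len_commute: "lcs_len u v = lcs_len v u"
  unfolding lcs_len_def by metis

lemma lev_commute: "lev u v = lev v u"
  unfolding lev_def by (simp add: lcs_len_commute add.commute)

lemma lev_nonneg: "0 \<le> lev u v"
  using lcs_len_le_length[of u v] lcs_len_le_length[of v u]
  unfolding lev_def by (simp add: lcs_len_commute)

lemma lev_self: "lev u u = 0"
  using lcs_len_le_length[of u u] length_le_lcs_len[of u u u] unfolding lev_def by simp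

lemma lev_same_length: "length u = length v \<Longrightarrow> lev u v = real (length u - lcs_len u v)"
  using lcs_len_le_length[of u v] unfolding lev_def by simp

lemma lev_prefix:
  assumes "prefix p q"
  shows "lev p q = (real (length q) - real (length p)) / 2"
proof -
  have "lcs_len p q = length p"
    using lcs_len_le_length[of p q] length_le_lcs_len[of p p q] assms by (simp add: prefix_imp_subseq)
  then show ?thesis unfolding lev_def by simp
qed

lemma lev_prefix_or_prefix:
  assumes "prefix p q \<or> prefix q p"
  shows "lev p q = \<bar>real (length q) - real (length p)\<bar> / 2"
  using assms lev_prefix[of p q] lev_prefix[of q p] prefix_length_le[of p q] prefix_length_le[of q p]
    lev_commute[of p q]
  by auto

lemma subseq_Cons_rightE:
  assumes "subseq s (a # v)"
  obtains "subseq s v" | s' where "s = a # s'" "subseq s' v"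
  using assms by (cases s) (auto split: if_splits)

lemma common_subseq_of_subseqs:
  "subseq s1 v \<Longrightarrow> subseq s2 v \<Longrightarrow>
     \<exists>s. subseq s s1 \<and> subseq s s2 \<and> length s1 + length s2 \<le> length s + length v"
proof (induction v arbitrary: s1 s2)
  case Nil
  then show ?case by auto
next
  case (Cons a v)
  from Cons.prems(1) show ?case
  proof (cases rule: subseq_Cons_rightE)
    case 1
    from Cons.prems(2) show ?thesis
    proof (cases rule: subseq_Cons_rightE)
      case 1
      then show ?thesis using Cons.IH \<open>subseq s1 v\<close> by fastforce
    next
      case (2 s2')
      then show ?thesis using Cons.IH[of s1 s2'] \<open>subseq s1 v\<close> by (fastforce intro: list_emb_Cons)
    qed
  next
    case (2 s1')
    from Cons.prems(2) show ?thesis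
    proof (cases rule: subseq_Cons_rightE)
      case 1
      obtain s where "subseq s s1'" "subseq s s2" "length s1' + length s2 \<le> length s + length v"
        using Cons.IH \<open>subseq s1' v\<close> \<open>subseq s2 v\<close> by blast
      then show ?thesis using \<open>s1 = a # s1'\<close> by (auto intro!: exI[of _ s])
    next
      case (2 s2')
      obtain s where "subseq s s1'" "subseq s s2'" "length s1' + length s2' \<le> length s + length v"
        using Cons.IH \<open>subseq s1' v\<close> \<open>subseq s2' v\<close> by blast
      then show ?thesis using \<open>s1 = a # s1'\<close> \<open>s2 = a # s2'\<close> by (auto intro!: exI[of _ "a # s"])
    qed
  qed
qed

lemma lcs_len_triangle: "lcs_len u v + lcs_len v w \<le> lcs_len u w + length v"
proof -
  obtain s1 where s1: "subseq s1 u" "subseq s1 v" "length s1 = lcs_len u v"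
    by (rule obtain_lcs)
  obtain s2 where s2: "subseq s2 v" "subseq s2 w" "length s2 = lcs_len v w"
    by (rule obtain_lcs)
  obtain s where s: "subseq s s1" "subseq s s2" "length s1 + length s2 \<le> length s + length v"
    using common_subseq_of_subseqs[OF s1(2) s2(1)] by blast
  have "length s \<le> lcs_len u w"
    using s s1 s2 by (intro length_le_lcs_len) (blast intro: subseq_order.order_trans)+
  with s s1 s2 show ?thesis by linarith
qed

lemma lev_triangle: "lev u w \<le> lev u v + lev v w"
  using lcs_len_triangle[of u v w] unfolding lev_def by (simp add: field_simps)

lemma length_Del: "j < length u \<Longrightarrow> length (Del j u) = length u - 1"
  by (simp add: Del_def)

lemma obtain_Del_subseq:
  assumes "subseq w u" and "length w < length u"
  obtains j where "j < length u" and "subseq w (Del j u)"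
  using assms
proof (induction u arbitrary: w thesis rule: list.induct)
  case Nil
  then show ?case by simp
next
  case (Cons a u)
  from Cons.prems(2) show ?case
  proof (cases rule: subseq_Cons_rightE)
    case 1
    then show ?thesis using Cons.prems(1)[of 0] by (simp add: Del_def)
  next
    case (2 w')
    with Cons.prems(3) have "length w' < length u" by simp
    with Cons.IH[OF _ \<open>subseq w' u\<close>] obtain j where "j < length u" "subseq w' (Del j u)" by blast
    then show ?thesis using Cons.prems(1)[of "Suc j"] \<open>w = a # w'\<close> by (simp add: Del_def)
  qed
qed

lemma lev_subseq_le_by_deletions:
  fixes F :: "'a list \<Rightarrow> 'b list" and \<phi> :: "'a list \<Rightarrow> real"
  assumes del: "\<And>u j. j < length u \<Longrightarrow> lev (F (Del j u)) (F u) \<le> c + \<phi> u - \<phi> (Del j u)"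
  shows "subseq w u \<Longrightarrow> lev (F w) (F u) \<le> real (length u - length w) * c + \<phi> u - \<phi> w"
proof (induction "length u - length w" arbitrary: u)
  case 0
  then have "w = u"
    by (metis diff_is_0_eq le_antisym list_emb_length subseq_same_length)
  then show ?case by (simp add: lev_self)
next
  case (Suc n)
  then have "length w < length u" by simp
  with \<open>subseq w u\<close> obtain j where j: "j < length u" "subseq w (Del j u)"
    by (rule obtain_Del_subseq)
  with Suc.hyps(2) have n: "n = length (Del j u) - length w" by (simp add: length_Del)
  have "lev (F w) (F u) \<le> lev (F w) (F (Del j u)) + lev (F (Del j u)) (F u)"
    by (rule lev_triangle)
  also have "\<dots> \<le> (real n * c + \<phi> (Del j u) - \<phi> w) + (c + \<phi> u - \<phi> (Del j u))"
    using Suc.hyps(1)[OF n j(2)] del[OF j(1)] n by (intro add_mono) simp_all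
  finally show ?case unfolding Suc.hyps(2)[symmetric] by (simp add: algebra_simps)
qed

lemma lev_image_le_lev:
  fixes F :: "'a list \<Rightarrow> 'b list" and c c' :: real
  assumes del1: "\<And>u j. j < length u \<Longrightarrow>
      lev (F (Del j u)) (F u) \<le> c + (real (length (F u)) - real (length (F (Del j u)))) / 2"
    and del2: "\<And>u j. j < length u \<Longrightarrow>
      lev (F (Del j u)) (F u) \<le> c' - (real (length (F u)) - real (length (F (Del j u)))) / 2"
    and same_length: "length u = length v"
  shows "lev (F u) (F v)
    \<le> (c + c') * lev u v - \<bar>real (length (F u)) - real (length (F v))\<bar> / 2"
proof -
  obtain w where w: "subseq w u" "subseq w v" "length w = lcs_len u v"
    by (rule obtain_lcs)
  define k where "k = real (length u - length w)"
  have lev_uv: "lev u v = k"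
    unfolding k_def using lev_same_length[OF same_length] w(3) by simp
  define \<phi> where "\<phi> u = real (length (F u)) / 2" for u
  have "lev (F (Del j u)) (F u) \<le> c + \<phi> u - \<phi> (Del j u)" if "j < length u" for u j
    using del1[OF that] unfolding \<phi>_def by (simp add: diff_divide_distrib)
  then have up1: "lev (F w) (F z) \<le> real (length z - length w) * c + \<phi> z - \<phi> w"
    if "subseq w z" for z
    using lev_subseq_le_by_deletions that by blast
  have "lev (F (Del j u)) (F u) \<le> c' + (- \<phi> u) - (- \<phi> (Del j u))" if "j < length u" for u j
    using del2[OF that] unfolding \<phi>_def by (simp add: diff_divide_distrib)
  then have up2: "lev (F w) (F z) \<le> real (length z - length w) * c' - \<phi> z + \<phi> w"
    if "subseq w z" for z
    using lev_subseq_le_by_deletions[of F c' "\<lambda>u. - \<phi> u"] that by fastforce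
  have "lev (F u) (F v) \<le> lev (F w) (F u) + lev (F w) (F v)"
    using lev_triangle lev_commute by metis
  moreover note up1[OF w(1)] up2[OF w(1)] up1[OF w(2)] up2[OF w(2)]
  ultimately show ?thesis
    unfolding lev_uv k_def \<phi>_def same_length abs_real_def by (simp add: field_simps split: if_split)
qed

lemma length_window: "length (window \<delta> x i) = \<delta>"
  by (simp add: window_def)

lemma length_pref [simp]: "length (pref x n) = n"
  by (simp add: pref_def)

lemma prefix_pref: "m \<le> n \<Longrightarrow> prefix (pref x m) (pref x n)"
  unfolding pref_def by (metis le_add_diff_inverse map_append prefixI upt_add_eq_append zero_le)

lemma prefix_nth: "prefix p q \<Longrightarrow> i < length p \<Longrightarrow> p ! i = q ! i"
  by (auto simp: prefix_def nth_append)

lemma dill_blocks_Suc: "dill_blocks \<delta> f x (Suc k) = dill_blocks \<delta> f x k @ f (window \<delta> x k)"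
  by (simp add: dill_blocks_def)

lemma length_dill_blocks: "length (dill_blocks \<delta> f x k) = (\<Sum>i<k. length (f (window \<delta> x i)))"
  by (induction k) (simp_all add: dill_blocks_def)

lemma prefix_dill_blocks: "k \<le> k' \<Longrightarrow> prefix (dill_blocks \<delta> f x k) (dill_blocks \<delta> f x k')"
proof (induction k' rule: dec_induct)
  case (step m)
  then show ?case by (simp add: dill_blocks_Suc prefix_append)
qed simp

lemma le_length_dill_blocks:
  assumes "\<And>w. length w = \<delta> \<Longrightarrow> f w \<noteq> []"
  shows "k \<le> length (dill_blocks \<delta> f x k)"
proof -
  have "1 \<le> length (f (window \<delta> x i))" for i
    using assms[OF length_window] by (simp add: Suc_le_eq)
  then have "(\<Sum>i<k. 1) \<le> (\<Sum>i<k. length (f (window \<delta> x i)))"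
    by (intro sum_mono)
  then show ?thesis by (simp add: length_dill_blocks)
qed

lemma pref_dill:
  assumes "\<And>w. length w = \<delta> \<Longrightarrow> f w \<noteq> []" and "n \<le> length (dill_blocks \<delta> f x k)"
  shows "pref (dill \<delta> f x) n = take n (dill_blocks \<delta> f x k)"
proof (rule nth_equalityI)
  fix i assume "i < length (pref (dill \<delta> f x) n)"
  then have i: "i < n" by simp
  let ?m = "max k (Suc i)"
  have "Suc i \<le> length (dill_blocks \<delta> f x (Suc i))"
    using le_length_dill_blocks[OF assms(1)] .
  then have "dill \<delta> f x i = dill_blocks \<delta> f x ?m ! i"
    unfolding dill_def by (simp add: prefix_nth prefix_dill_blocks)
  also have "\<dots> = dill_blocks \<delta> f x k ! i"
    using i assms(2) by (intro prefix_nth[OF prefix_dill_blocks, symmetric]) simp_all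
  finally show "pref (dill \<delta> f x) n ! i = take n (dill_blocks \<delta> f x k) ! i"
    using i by (simp add: pref_def)
qed (use assms(2) in simp)

lemma fstar_pref:
  assumes "1 \<le> \<delta>"
  shows "fstar \<delta> f (pref x (k + \<delta> - 1)) = dill_blocks \<delta> f x k"
proof (cases k)
  case 0
  with assms show ?thesis by (simp add: fstar_def dill_blocks_def)
next
  case (Suc k')
  with assms have windows: "take \<delta> (drop i (pref x (k + \<delta> - 1))) = window \<delta> x i" if "i < k" for i
    using that by (intro nth_equalityI) (auto simp: pref_def window_def)
  then have "map (\<lambda>i. f (take \<delta> (drop i (pref x (k + \<delta> - 1))))) [0..<k]
      = map (\<lambda>i. f (window \<delta> x i)) [0..<k]"
    by (intro map_cong) simp_all
  with Suc assms show ?thesis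
    unfolding fstar_def dill_blocks_def by (simp del: map_eq_conv)
qed

lemma lev_pref_le_add:
  assumes "m \<le> n"
  shows "lev (pref x n) (pref y n) \<le> lev (pref x m) (pref y m) + (real n - real m)"
proof -
  have "lev (pref x n) (pref y n) \<le> lev (pref x n) (pref x m) + (lev (pref x m) (pref y m) + lev (pref y m) (pref y n))"
    by (meson add_left_mono lev_triangle order_trans)
  moreover have "lev (pref x n) (pref x m) = (real n - real m) / 2"
    using lev_prefix[OF prefix_pref[OF assms]] lev_commute by (metis length_pref)
  moreover have "lev (pref y m) (pref y n) = (real n - real m) / 2"
    using lev_prefix[OF prefix_pref[OF assms]] by simp
  ultimately show ?thesis by argo
qed

lemma lev_pref_dill_at_block_end:
  fixes c c' :: real
  assumes "1 \<le> \<delta>" and nonempty: "\<And>w. length w = \<delta> \<Longrightarrow> f w \<noteq> []"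
    and del1: "\<And>u j. j < length u \<Longrightarrow> lev (fstar \<delta> f (Del j u)) (fstar \<delta> f u)
      \<le> c + (real (length (fstar \<delta> f u)) - real (length (fstar \<delta> f (Del j u)))) / 2"
    and del2: "\<And>u j. j < length u \<Longrightarrow> lev (fstar \<delta> f (Del j u)) (fstar \<delta> f u)
      \<le> c' - (real (length (fstar \<delta> f u)) - real (length (fstar \<delta> f (Del j u)))) / 2"
    and n: "n = length (dill_blocks \<delta> f x k)"
  shows "lev (pref (dill \<delta> f x) n) (pref (dill \<delta> f y) n)
    \<le> (c + c') * lev (pref x (k + \<delta> - 1)) (pref y (k + \<delta> - 1))"
proof -
  define a where "a = dill_blocks \<delta> f x k"
  define b where "b = dill_blocks \<delta> f y k"
  define m where "m = max k n"
  have pref_x: "pref (dill \<delta> f x) n = a"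
    unfolding a_def n using pref_dill[OF nonempty order.refl] by simp
  have "n \<le> length (dill_blocks \<delta> f y m)"
    using le_length_dill_blocks[OF nonempty, where k = m and x = y] by (simp add: m_def)
  then have "pref (dill \<delta> f y) n = take n (dill_blocks \<delta> f y m)"
    using pref_dill[of \<delta> f, OF nonempty] by simp
  then have "prefix b (pref (dill \<delta> f y) n) \<or> prefix (pref (dill \<delta> f y) n) b"
    unfolding b_def
    by (metis prefix_same_cases prefix_dill_blocks take_is_prefix max.cobounded1 m_def)
  then have "lev b (pref (dill \<delta> f y) n) = \<bar>real n - real (length b)\<bar> / 2"
    by (simp add: lev_prefix_or_prefix)
  moreover have "lev a b \<le> (c + c') * lev (pref x (k + \<delta> - 1)) (pref y (k + \<delta> - 1))
      - \<bar>real (length a) - real (length b)\<bar> / 2"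
    using lev_image_le_lev[OF del1 del2, of "pref x (k + \<delta> - 1)" "pref y (k + \<delta> - 1)"]
    unfolding a_def b_def fstar_pref[OF \<open>1 \<le> \<delta>\<close>] by simp
  moreover have "lev a (pref (dill \<delta> f y) n) \<le> lev a b + lev b (pref (dill \<delta> f y) n)"
    by (rule lev_triangle)
  moreover have "real (length a) = real n"
    unfolding a_def n ..
  ultimately show ?thesis unfolding pref_x by argo
qed

lemma obtain_block_index:
  fixes N :: "nat \<Rightarrow> nat"
  assumes "strict_mono N" and "N 0 = 0"
  obtains \<kappa> where "\<And>n. N (\<kappa> n) \<le> n" and "\<And>n. n < N (Suc (\<kappa> n))"
    and "filterlim \<kappa> at_top sequentially"
proof -
  have "\<exists>k. N k \<le> n \<and> n < N (Suc k)" for n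
  proof (induction n)
    case 0
    show ?case using assms strict_monoD[OF assms(1), of 0 1] by auto
  next
    case (Suc n)
    then obtain k where k: "N k \<le> n" "n < N (Suc k)" by blast
    show ?case
    proof (cases "Suc n < N (Suc k)")
      case True
      with k show ?thesis by (auto intro!: exI[of _ k])
    next
      case False
      with k strict_monoD[OF assms(1), of "Suc k" "Suc (Suc k)"] show ?thesis
        by (auto intro!: exI[of _ "Suc k"])
    qed
  qed
  then obtain \<kappa> where below: "N (\<kappa> n) \<le> n" and above: "n < N (Suc (\<kappa> n))" for n
    by metis
  have "eventually (\<lambda>n. z \<le> \<kappa> n) sequentially" for z
  proof (rule eventually_sequentiallyI)
    fix n assume "N z \<le> n"
    with above[of n] have "N z < N (Suc (\<kappa> n))" by simp
    then show "z \<le> \<kappa> n"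
      using strict_mono_less[OF assms(1)] by simp
  qed
  then have "filterlim \<kappa> at_top sequentially"
    by (simp add: filterlim_at_top)
  with below above show thesis by (rule that)
qed

lemma limsup_ratio_le_of_block_bound_rate:
  fixes a e :: "nat \<Rightarrow> real" and \<kappa> :: "nat \<Rightarrow> nat" and S L C r :: real
  assumes \<kappa>: "filterlim \<kappa> at_top sequentially"
    and a_le: "\<And>n. a n \<le> S * e (\<kappa> n + d) + C"
    and \<kappa>_le: "\<And>n. L * real (\<kappa> n) \<le> real n"
    and "0 < L" "0 \<le> S" "0 \<le> C" "0 \<le> r"
    and e_le: "eventually (\<lambda>l. e l \<le> r * real l) sequentially"
  shows "limsup (\<lambda>n. ereal (a n / real n)) \<le> ereal (S / L * r)"
proof -
  define c where "c = S / L"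
  define b where "b n = c * r + (c * r * d + C / L) / real (\<kappa> n)" for n
  have "0 \<le> c" unfolding c_def using \<open>0 < L\<close> \<open>0 \<le> S\<close> by simp
  have "eventually (\<lambda>n. e (\<kappa> n + d) \<le> r * real (\<kappa> n + d)) sequentially"
    using eventually_compose_filterlim[OF e_le filterlim_compose[OF filterlim_add_const_nat_at_top \<kappa>]] .
  moreover have "eventually (\<lambda>n. 0 < \<kappa> n) sequentially"
    using eventually_compose_filterlim[OF eventually_gt_at_top \<kappa>] .
  ultimately have "eventually (\<lambda>n. a n / real n \<le> b n) sequentially"
  proof eventually_elim
    case (elim n)
    then have "0 < L * real (\<kappa> n)" using \<open>0 < L\<close> by simp
    have "a n \<le> S * (r * real (\<kappa> n + d)) + C"
      using a_le[of n] elim mult_left_mono[OF _ \<open>0 \<le> S\<close>] by (meson add_mono order.trans order_refl)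
    also have "\<dots> = b n * (L * real (\<kappa> n))"
      using \<open>0 < L\<close> elim unfolding b_def c_def by (simp add: field_simps)
    also have "\<dots> \<le> b n * real n"
      using \<kappa>_le[of n] \<open>0 \<le> c\<close> \<open>0 \<le> r\<close> \<open>0 < L\<close> \<open>0 \<le> C\<close>
      unfolding b_def by (intro mult_left_mono) simp_all
    finally show ?case
      using \<open>0 < L * real (\<kappa> n)\<close> \<kappa>_le[of n] by (simp add: divide_le_eq mult.commute)
  qed
  then have "limsup (\<lambda>n. ereal (a n / real n)) \<le> limsup (\<lambda>n. ereal (b n))"
    by (intro Limsup_mono) simp
  also have "\<dots> = ereal (c * r)"
  proof (intro lim_imp_Limsup)
    have "filterlim (\<lambda>n. real (\<kappa> n)) at_top sequentially"
      using filterlim_compose[OF filterlim_real_sequentially \<kappa>] .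
    then have "b \<longlonglongrightarrow> c * r + 0"
      unfolding b_def
      by (intro tendsto_add tendsto_const tendsto_divide_0[OF tendsto_const]
          filterlim_at_top_imp_at_infinity)
    then show "(\<lambda>n. ereal (b n)) \<longlonglongrightarrow> ereal (c * r)"
      by simp
  qed simp
  finally show ?thesis unfolding c_def .
qed

lemma limsup_ratio_le_of_block_bound:
  fixes a e :: "nat \<Rightarrow> real" and \<kappa> :: "nat \<Rightarrow> nat" and S L C :: real
  assumes \<kappa>: "filterlim \<kappa> at_top sequentially"
    and a_le: "\<And>n. a n \<le> S * e (\<kappa> n + d) + C"
    and \<kappa>_le: "\<And>n. L * real (\<kappa> n) \<le> real n"
    and "0 < L" "0 \<le> S" "0 \<le> C"
    and e_nonneg: "\<And>l. 0 \<le> e l" and e_le: "\<And>l. e l \<le> real l"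
  shows "limsup (\<lambda>n. ereal (a n / real n)) \<le> ereal (S / L) * limsup (\<lambda>l. ereal (e l / real l))"
proof -
  define c where "c = S / L"
  have "0 \<le> c" unfolding c_def using \<open>0 < L\<close> \<open>0 \<le> S\<close> by simp
  have "limsup (\<lambda>l. ereal (e l / real l)) \<le> 1"
    using e_nonneg e_le by (intro Limsup_bounded always_eventually) (simp add: divide_le_eq)
  moreover have "0 \<le> limsup (\<lambda>l. ereal (e l / real l))"
    using e_nonneg by (intro le_Limsup) simp_all
  ultimately obtain g where g: "limsup (\<lambda>l. ereal (e l / real l)) = ereal g" and "0 \<le> g"
    by (cases "limsup (\<lambda>l. ereal (e l / real l))") auto
  have "limsup (\<lambda>n. ereal (a n / real n)) \<le> ereal (c * g)"
  proof (rule ereal_le_epsilon2)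
    fix \<epsilon> :: real assume "0 < \<epsilon>"
    define r where "r = g + \<epsilon> / (c + 1)"
    have "0 \<le> r" "g < r" unfolding r_def using \<open>0 < \<epsilon>\<close> \<open>0 \<le> c\<close> \<open>0 \<le> g\<close> by simp_all
    then have "eventually (\<lambda>l. ereal (e l / real l) < ereal r) sequentially"
      using g by (intro Limsup_lessD) simp
    then have "eventually (\<lambda>l. e l \<le> r * real l) sequentially"
      using eventually_gt_at_top[of 0] by eventually_elim (simp add: divide_less_eq)
    then have "limsup (\<lambda>n. ereal (a n / real n)) \<le> ereal (c * r)"
      unfolding c_def
      by (rule limsup_ratio_le_of_block_bound_rate[where e = e,
            OF \<kappa> a_le \<kappa>_le \<open>0 < L\<close> \<open>0 \<le> S\<close> \<open>0 \<le> C\<close> \<open>0 \<le> r\<close>])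
    also have "c * r \<le> c * g + \<epsilon>"
      unfolding r_def using \<open>0 < \<epsilon>\<close> \<open>0 \<le> c\<close> by (simp add: field_simps)
    finally show "limsup (\<lambda>n. ereal (a n / real n)) \<le> ereal (c * g) + ereal \<epsilon>"
      by simp
  qed
  then show ?thesis unfolding g c_def by simp
qed

theorem lemmal:
  fixes f :: "'a::finite list \<Rightarrow> 'a list" and \<delta> M M' :: nat and L :: real
    and x y :: "nat \<Rightarrow> 'a"
  assumes diam: "\<delta> \<ge> 1"
    and nonempty: "\<And>w. length w = \<delta> \<Longrightarrow> f w \<noteq> []"
    and bound1: "\<And>u j. j < length u \<Longrightarrow>
       lev (fstar \<delta> f (Del j u)) (fstar \<delta> f u)
         \<le> real M + (real (length (fstar \<delta> f u)) - real (length (fstar \<delta> f (Del j u)))) / 2"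
    and bound2: "\<And>u j. j < length u \<Longrightarrow>
       lev (fstar \<delta> f (Del j u)) (fstar \<delta> f u)
         \<le> real M' - (real (length (fstar \<delta> f u)) - real (length (fstar \<delta> f (Del j u)))) / 2"
    and Lpos: "L > 0"
    and xlen: "\<And>i. real (length (f (window \<delta> x i))) \<ge> L"
  shows "feldman (dill \<delta> f x) (dill \<delta> f y) \<le> ereal ((real M + real M') / L) * feldman x y"
proof -
  define N where "N k = length (dill_blocks \<delta> f x k)" for k
  define K where "K = Max ((\<lambda>w. length (f w)) ` {w. length w = \<delta>})"
  have block_le_K: "length (f (window \<delta> x i)) \<le> K" for i
    unfolding K_def using finite_lists_length_eq[OF finite_UNIV, of \<delta>] length_window
    by (intro Max_ge) auto
  have "strict_mono N"
    unfolding strict_mono_Suc_iff N_def using nonempty[OF length_window]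
    by (simp add: dill_blocks_Suc)
  moreover have "N 0 = 0"
    unfolding N_def by (simp add: dill_blocks_def)
  ultimately obtain \<kappa> where below: "\<And>n. N (\<kappa> n) \<le> n" and above: "\<And>n. n < N (Suc (\<kappa> n))"
    and \<kappa>: "filterlim \<kappa> at_top sequentially"
    using obtain_block_index by blast
  have lev_pref_dill_le: "lev (pref (dill \<delta> f x) n) (pref (dill \<delta> f y) n)
      \<le> (real M + real M') * lev (pref x (\<kappa> n + (\<delta> - 1))) (pref y (\<kappa> n + (\<delta> - 1))) + real K"
    for n
  proof -
    have "real n - real (N (\<kappa> n)) \<le> real K"
      using above[of n] block_le_K[of "\<kappa> n"] unfolding N_def by (simp add: dill_blocks_Suc)
    moreover have "lev (pref (dill \<delta> f x) (N (\<kappa> n))) (pref (dill \<delta> f y) (N (\<kappa> n)))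
        \<le> (real M + real M') * lev (pref x (\<kappa> n + \<delta> - 1)) (pref y (\<kappa> n + \<delta> - 1))"
      using lev_pref_dill_at_block_end[OF diam nonempty bound1 bound2 N_def] .
    ultimately show ?thesis
      using lev_pref_le_add[OF below[of n], of "dill \<delta> f x" "dill \<delta> f y"] diam by simp
  qed
  have "L * real (\<kappa> n) \<le> real n" for n
  proof -
    have "(\<Sum>i<\<kappa> n. L) \<le> (\<Sum>i<\<kappa> n. real (length (f (window \<delta> x i))))"
      by (intro sum_mono xlen)
    then have "L * real (\<kappa> n) \<le> real (N (\<kappa> n))"
      unfolding N_def length_dill_blocks by (simp add: mult.commute)
    with below[of n] show ?thesis by linarith
  qed
  then show ?thesis
    unfolding feldman_def
    using limsup_ratio_le_of_block_bound[where e = "\<lambda>l. lev (pref x l) (pref y l)", OF \<kappa> lev_pref_dill_le] Lpos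
    by (simp add: lev_nonneg lev_same_length)
qed

end
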